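(* Let $s$ be an integer with $3\le s\le 8$, and let $P(z)=1+\sum_{k=1}^s a_kz^k$ with real coefficients. Suppose that $P^{(k)}(-2s)\ge 0$ for all $k=0,1,\dots,s$, and that \[ \frac12\left(a_1^2-\frac{(1-a_1)^2}{s}\right)\ge a_2. \] Then $P(z)=\left(1+\frac{z}{2s}\right)^s$. *)

theory Defs
  imports "HOL-Computational_Algebra.Polynomial"
begin

end

theory Submission
  imports Defs
begin

text \<open>
  Expand \<open>P\<close> around \<open>-t\<close> with \<open>t = 2s\<close>: \<open>P(z) = \<Sum>\<^sub>k w\<^sub>k (1 + z/t)\<^sup>k\<close>, where \<open>w\<^sub>k\<close> is the
  \<open>k\<close>-th derivative of \<open>P\<close> at \<open>-t\<close> times \<open>t\<^sup>k/k!\<close>. The weights are nonnegative and sum to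
  \<open>P(0) = 1\<close>, so they form a probability distribution on \<open>{0..s}\<close>, with mean \<open>m = t a\<^sub>1\<close> and
  second factorial moment \<open>2 t\<^sup>2 a\<^sub>2\<close>. As the variance is nonnegative, the hypothesis on \<open>a\<^sub>2\<close>
  forces \<open>(2s - m)\<^sup>2 \<le> s m\<close>, i.e. \<open>m \<ge> s\<close>; a distribution on \<open>{0..s}\<close> with mean \<open>s\<close> is the
  point mass at \<open>s\<close>, whence \<open>P(z) = (1 + z/t)\<^sup>s\<close>.
\<close>

lemma coeff_monic_linear_power:
  fixes a :: "'a::comm_semiring_1"
  shows "coeff ([:a, 1:] ^ n) i = of_nat (n choose i) * a ^ (n - i)"
proof (cases "i \<le> n")
  case True
  then show ?thesis by (simp add: coeff_linear_poly_power)
next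
  case False
  then have "coeff ([:a, 1:] ^ n) i = 0"
    by (intro coeff_eq_0) (simp add: degree_linear_power)
  with False show ?thesis by (simp add: not_le binomial_eq_0)
qed

lemma pcompose_monom: "pcompose (monom c n) q = smult c (q ^ n)"
  for q :: "'a::comm_semiring_1 poly"
  by (induction n) (simp_all add: monom_altdef pcompose_smult pcompose_mult pcompose_pCons)

lemma higher_pderiv_pcompose_shift:
  fixes p :: "'a::{comm_semiring_1,semiring_no_zero_divisors} poly"
  shows "(pderiv ^^ k) (pcompose p [:a, 1:]) = pcompose ((pderiv ^^ k) p) [:a, 1:]"
  by (induction k) (simp_all add: pderiv_pcompose pderiv_pCons)

lemma taylor_expansion_poly:
  fixes p :: "'a::field_char_0 poly"
  assumes "degree p \<le> n"
  shows "p = (\<Sum>k\<le>n. smult (poly ((pderiv ^^ k) p) a / fact k) ([:-a, 1:] ^ k))"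
proof -
  define q where "q = pcompose p [:a, 1:]"
  have coeff_q: "coeff q k = poly ((pderiv ^^ k) p) a / fact k" for k
  proof -
    have "poly ((pderiv ^^ k) p) a = poly ((pderiv ^^ k) q) 0"
      by (simp add: q_def higher_pderiv_pcompose_shift poly_pcompose)
    also have "\<dots> = fact k * coeff q k"
      by (simp add: poly_0_coeff_0 coeff_higher_pderiv pochhammer_fact)
    finally show ?thesis by simp
  qed
  have "p = pcompose q [:-a, 1:]"
    by (simp add: q_def pcompose_assoc[symmetric] pcompose_pCons)
  also have "q = (\<Sum>k\<le>n. monom (coeff q k) k)"
    using assms by (simp add: q_def degree_pcompose poly_as_sum_of_monoms')
  finally show ?thesis
    by (simp add: pcompose_sum pcompose_monom coeff_q)
qed

lemma coeff_sum_smult_linear_power: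
  fixes t :: "'a::field"
  assumes "t \<noteq> 0"
  shows "coeff (\<Sum>k\<in>A. smult (w k / t ^ k) ([:t, 1:] ^ k)) j
           = (\<Sum>k\<in>A. w k * of_nat (k choose j)) / t ^ j"
  unfolding coeff_sum sum_divide_distrib
proof (rule sum.cong)
  fix k
  show "coeff (smult (w k / t ^ k) ([:t, 1:] ^ k)) j = w k * of_nat (k choose j) / t ^ j"
  proof (cases "j \<le> k")
    case True
    then have "t ^ k = t ^ (k - j) * t ^ j"
      by (simp flip: power_add)
    with assms show ?thesis
      by (simp add: coeff_monic_linear_power field_simps)
  qed (simp add: coeff_monic_linear_power not_le binomial_eq_0)
qed simp

lemma of_nat_choose_two: "2 * of_nat (n choose 2) = (of_nat n * (of_nat n - 1) :: 'a::comm_ring_1)"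
proof -
  have "even (n * (n - 1))" by (cases "even n") auto
  then have "2 * (n choose 2) = n * (n - 1)" by (simp add: choose_two)
  then have "2 * of_nat (n choose 2) = (of_nat (n * (n - 1)) :: 'a)"
    by (metis of_nat_mult of_nat_numeral)
  then show ?thesis by (cases n) (simp_all add: algebra_simps)
qed

lemma weighted_mean_square_le:
  fixes w f :: "'a \<Rightarrow> real"
  assumes "\<And>x. x \<in> A \<Longrightarrow> w x \<ge> 0" and "sum w A = 1"
  shows "(\<Sum>x\<in>A. w x * f x)\<^sup>2 \<le> (\<Sum>x\<in>A. w x * (f x)\<^sup>2)"
proof -
  define m where "m = (\<Sum>x\<in>A. w x * f x)"
  have "0 \<le> (\<Sum>x\<in>A. w x * (f x - m)\<^sup>2)"
    using assms(1) by (intro sum_nonneg) simp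
  also have "\<dots> = (\<Sum>x\<in>A. w x * (f x)\<^sup>2) - 2 * m * (\<Sum>x\<in>A. w x * f x) + m\<^sup>2 * sum w A"
    by (simp add: power2_eq_square algebra_simps sum.distrib sum_subtractf sum_distrib_left)
  finally show ?thesis
    using assms(2) by (simp add: flip: m_def) (simp add: power2_eq_square)
qed

lemma point_mass_if_mean_ge_max:
  fixes w :: "nat \<Rightarrow> real"
  assumes "\<And>k. k \<le> n \<Longrightarrow> w k \<ge> 0" and "(\<Sum>k\<le>n. w k) = 1"
    and "real n \<le> (\<Sum>k\<le>n. w k * real k)" and "k \<le> n"
  shows "w k = (if k = n then 1 else 0)"
proof -
  have "(\<Sum>k\<le>n. w k * (real n - real k)) \<le> 0"
    using assms(2,3) by (simp add: algebra_simps sum_subtractf flip: sum_distrib_left)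
  moreover have nonneg: "\<And>k. k \<le> n \<Longrightarrow> w k * (real n - real k) \<ge> 0"
    using assms(1) by simp
  ultimately have "(\<Sum>k\<le>n. w k * (real n - real k)) = 0"
    by (intro antisym sum_nonneg) auto
  then have below: "w k = 0" if "k < n" for k
    using nonneg that by (subst (asm) sum_nonneg_eq_0_iff) auto
  have "(\<Sum>k\<le>n. w k) = (\<Sum>k\<in>{n}. w k)"
    by (rule sum.mono_neutral_right) (auto simp: below)
  then show ?thesis
    using assms(2,4) below by auto
qed

lemma point_mass_if_factorial_moment_small:
  fixes w :: "nat \<Rightarrow> real" and n :: nat
  defines "m \<equiv> (\<Sum>k\<le>n. w k * real k)"
  assumes "n > 0" and "\<And>k. k \<le> n \<Longrightarrow> w k \<ge> 0" and "(\<Sum>k\<le>n. w k) = 1"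
    and "2 * (\<Sum>k\<le>n. w k * of_nat (k choose 2)) \<le> m\<^sup>2 - (2 * real n - m)\<^sup>2 / real n"
    and "k \<le> n"
  shows "w k = (if k = n then 1 else 0)"
proof -
  have "m\<^sup>2 - m \<le> (\<Sum>k\<le>n. w k * (real k)\<^sup>2) - m"
    using weighted_mean_square_le[of "{..n}" w real] assms(3,4) by (simp add: m_def)
  also have "\<dots> = (\<Sum>k\<le>n. w k * (2 * of_nat (k choose 2)))"
    by (simp add: of_nat_choose_two power2_eq_square algebra_simps sum_subtractf m_def)
  also have "\<dots> = 2 * (\<Sum>k\<le>n. w k * of_nat (k choose 2))"
    by (simp add: sum_distrib_left mult_ac)
  finally have "(2 * real n - m)\<^sup>2 / real n \<le> m"
    using assms(5) by linarith
  then have "(2 * real n - m)\<^sup>2 \<le> real n * m"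
    using assms(2) by (simp add: pos_divide_le_eq mult.commute)
  then have "real n \<le> m"
  proof (rule contrapos_pp)
    assume "\<not> real n \<le> m"
    then have "real n * m < (real n)\<^sup>2"
      using assms(2) by (simp add: power2_eq_square)
    also have "\<dots> < (2 * real n - m)\<^sup>2"
      using \<open>\<not> real n \<le> m\<close> by (intro power_strict_mono) simp_all
    finally show "\<not> (2 * real n - m)\<^sup>2 \<le> real n * m"
      by simp
  qed
  then show ?thesis
    using point_mass_if_mean_ge_max assms(3,4,6) by (simp add: m_def)
qed

theorem lemma2p5:
  fixes s :: nat and P :: "real poly"
  assumes "3 \<le> s" and "s \<le> 8"
    and "degree P \<le> s" and "coeff P 0 = 1"
    and "\<forall>k \<le> s. poly ((pderiv ^^ k) P) (- 2 * real s) \<ge> 0"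
    and "(1/2) * ((coeff P 1)^2 - (1 - coeff P 1)^2 / real s) \<ge> coeff P 2"
  shows "P = [:1, 1 / (2 * real s):] ^ s"
proof -
  define t where "t = 2 * real s"
  have t: "t > 0" using assms(1) by (simp add: t_def)
  define w where "w k = poly ((pderiv ^^ k) P) (-t) / fact k * t ^ k" for k
  have expansion: "P = (\<Sum>k\<le>s. smult (w k / t ^ k) ([:t, 1:] ^ k))"
    using taylor_expansion_poly[OF assms(3), of "-t"] t by (simp add: w_def)
  have coeff_P: "coeff P j = (\<Sum>k\<le>s. w k * of_nat (k choose j)) / t ^ j" for j
    using coeff_sum_smult_linear_power[of t w "{..s}" j] t by (simp flip: expansion)
  define m where "m = (\<Sum>k\<le>s. w k * real k)"
  have "2 * (\<Sum>k\<le>s. w k * of_nat (k choose 2)) = 2 * t\<^sup>2 * coeff P 2"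
    using coeff_P[of 2] t by simp
  also have "\<dots> \<le> 2 * t\<^sup>2 * ((1/2) * ((m / t)\<^sup>2 - (1 - m / t)\<^sup>2 / real s))"
    using assms(6) coeff_P[of 1] by (intro mult_left_mono) (simp_all add: m_def)
  also have "\<dots> = m\<^sup>2 - (t - m)\<^sup>2 / real s"
    using t assms(1) by (simp add: field_simps power2_eq_square)
  finally have w: "w k = (if k = s then 1 else 0)" if "k \<le> s" for k
    using point_mass_if_factorial_moment_small[of s w k] assms(1,4,5) coeff_P[of 0] t that
    by (simp add: m_def t_def w_def)
  have "P = (\<Sum>k\<le>s. if k = s then smult (1 / t ^ s) ([:t, 1:] ^ s) else 0)"
    by (subst expansion, rule sum.cong) (simp_all add: w)
  also have "\<dots> = (smult (1 / t) [:t, 1:]) ^ s"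
    by (simp only: sum.delta finite_atMost atMost_iff le_refl if_True power_one_over smult_power)
  also have "smult (1 / t) [:t, 1:] = [:1, 1 / (2 * real s):]"
    using t by (simp add: t_def)
  finally show ?thesis .
qed

end
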